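(* Let $\Omega\subset\mathbb{R}^{d}$ be a variational parameter space and $\{q(\cdot|\boldsymbol{\lambda})\}_{\boldsymbol{\lambda}\in\Omega}$ a family of probability densities on the latent space. Let $f(\mathbf{z})=-\log \pi(D,\mathbf{z})$. For $\rho\in\mathcal{P}(\Omega)$ define the mixture $q_\rho(\mathbf{z})=\mathbb{E}_{\boldsymbol{\lambda}'\sim\rho}[q(\mathbf{z}|\boldsymbol{\lambda}')]$ and the functional $$\mathcal{L}(\rho)=\mathbb{E}_{\boldsymbol{\lambda}\sim\rho}\,\mathbb{E}_{\mathbf{z}\sim q(\cdot|\boldsymbol{\lambda})}\big[f(\mathbf{z})+\log q_\rho(\mathbf{z})\big].$$ Then the first variation of $\mathcal{L}$ at $\rho$ is $$\delta\mathcal{L}(\rho)(\boldsymbol{\lambda})=\mathbb{E}_{\mathbf{z}\sim q(\cdot|\boldsymbol{\lambda})}\Big[f(\mathbf{z})+\log\big(\mathbb{E}_{\boldsymbol{\lambda}'\sim\rho}[q(\mathbf{z}|\boldsymbol{\lambda}')]\big)\Big]+1 .$$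
   Context: $\pi(D,\mathbf{z})$ is the (unnormalized) joint density of observations $D$ and latent variable $\mathbf{z}$. $\mathcal{P}(\Omega)$ is the set of probability distributions on $\Omega$ (identified with their densities). The first variation $\delta\mathcal{L}(\rho):\Omega\to\mathbb{R}$ is the function such that for every $\chi\in\mathcal{P}(\Omega)$, $\lim_{\varepsilon\to 0}\frac{1}{\varepsilon}[\mathcal{L}(\rho+\varepsilon\chi)-\mathcal{L}(\rho)]=\int \chi(\boldsymbol{\lambda})\,\delta\mathcal{L}(\rho)(\boldsymbol{\lambda})\,d\boldsymbol{\lambda}$. *)

theory Defs
  imports "HOL-Analysis.Analysis"
begin

text \<open>Omega is a Borel subset of R^d (the euclidean space 'a); densities on Omega are
  taken w.r.t. Lebesgue measure. The latent space is a measure space M and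
  q z l = q(z|l) is a density w.r.t. M.\<close>

definition prob_density :: "'a::euclidean_space set \<Rightarrow> ('a \<Rightarrow> real) \<Rightarrow> bool" where
  "prob_density \<Omega> \<rho> \<longleftrightarrow> \<rho> \<in> borel_measurable lborel \<and> (\<forall>l\<in>\<Omega>. 0 \<le> \<rho> l)
     \<and> set_integrable lborel \<Omega> \<rho> \<and> (LINT l:\<Omega>|lborel. \<rho> l) = 1"

definition mixture :: "'a::euclidean_space set \<Rightarrow> ('z \<Rightarrow> 'a \<Rightarrow> real) \<Rightarrow> ('a \<Rightarrow> real) \<Rightarrow> 'z \<Rightarrow> real" where
  "mixture \<Omega> q \<rho> z = (LINT l:\<Omega>|lborel. \<rho> l * q z l)"

definition VI_L :: "'z measure \<Rightarrow> 'a::euclidean_space set \<Rightarrow> ('z \<Rightarrow> 'a \<Rightarrow> real) \<Rightarrow> ('z \<Rightarrow> real)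
    \<Rightarrow> ('a \<Rightarrow> real) \<Rightarrow> real" where
  "VI_L M \<Omega> q \<pi> \<rho> =
     (LINT l:\<Omega>|lborel. \<rho> l * (\<integral>z. q z l * (- ln (\<pi> z) + ln (mixture \<Omega> q \<rho> z)) \<partial>M))"

definition first_variation_at :: "'a::euclidean_space set \<Rightarrow> (('a \<Rightarrow> real) \<Rightarrow> real)
    \<Rightarrow> ('a \<Rightarrow> real) \<Rightarrow> ('a \<Rightarrow> real) \<Rightarrow> bool" where
  "first_variation_at \<Omega> Lf \<rho> g \<longleftrightarrow>
     (\<forall>\<psi>. prob_density \<Omega> \<psi> \<longrightarrow>
        ((\<lambda>\<epsilon>. (Lf (\<lambda>l. \<rho> l + \<epsilon> * \<psi> l) - Lf \<rho>) / \<epsilon>)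
           \<longlongrightarrow> (LINT l:\<Omega>|lborel. \<psi> l * g l)) (at_right 0))"

end

theory Submission
  imports Defs
begin

(* Write m = q_rho, n = q_psi and A = -ln pi. Since mixing is linear in the weight, Fubini turns
   L(rho + e psi) into the latent integral of (m + e n)(A + ln (m + e n)). The difference quotients
   of this function of e converge pointwise to its derivative n (A + ln m) + n at 0, and by the mean
   value theorem and monotonicity of ln they are dominated, for 0 < e <= e0, by a function that is
   integrable by the hypotheses at rho, psi and rho + e0 psi. Dominated convergence gives the limit,
   and Fubini again, with the integral of n equal to 1, identifies it with the pairing of psi and
   the claimed first variation. *)

lemma abs_mult_between_le:
  fixes K K' a b c :: real
  assumes "0 \<le> K" "K \<le> K'" "a \<le> c" "c \<le> b"
  shows "\<bar>K * c\<bar> \<le> K' * (\<bar>a\<bar> + \<bar>b\<bar>)"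
proof -
  have "\<bar>K * c\<bar> = K * \<bar>c\<bar>" using assms(1) by (simp add: abs_mult)
  also have "\<dots> \<le> K' * (\<bar>a\<bar> + \<bar>b\<bar>)"
    using assms by (intro mult_mono) auto
  finally show ?thesis .
qed

lemma ln_shift_mono:
  fixes m n s t :: real
  assumes "0 < m" "0 \<le> n" "0 \<le> s" "s \<le> t"
  shows "ln (m + s*n) \<le> ln (m + t*n)"
proof -
  have "s*n \<le> t*n" "0 \<le> s*n"
    using assms by (simp_all add: mult_right_mono)
  then show ?thesis
    using assms(1) by simp
qed

lemma has_real_derivative_shifted_xlnx:
  fixes m n A t :: real
  assumes "0 < m + t*n"
  shows "((\<lambda>s. (m + s*n) * (A + ln (m + s*n))) has_real_derivative n * (A + ln (m + t*n)) + n) (at t)"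
  using assms by (auto intro!: derivative_eq_intros)

lemma shifted_xlnx_quotient_tendsto:
  fixes m n A :: real
  assumes "0 < m"
  shows "((\<lambda>e. ((m + e*n) * (A + ln (m + e*n)) - m * (A + ln m)) / e) \<longlongrightarrow> n * (A + ln m) + n)
           (at_right 0)"
proof -
  have "((\<lambda>s. (m + s*n) * (A + ln (m + s*n))) has_real_derivative n * (A + ln m) + n) (at 0 within {0<..})"
    using has_real_derivative_shifted_xlnx[of m 0 n A] assms by (simp add: has_field_derivative_at_within)
  then show ?thesis
    by (simp add: has_field_derivative_iff)
qed

(* The bound is shaped to be integrable under the hypothesis at rho + e0 psi: the factor n in front
   of ln (m + e0 n) is absorbed using n <= (m + e0 n) / e0. *)
lemma shifted_xlnx_quotient_bound:
  fixes m n A e e0 :: real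
  assumes "0 < m" "0 \<le> n" "0 < e" "e \<le> e0"
  shows "\<bar>((m + e*n) * (A + ln (m + e*n)) - m * (A + ln m)) / e\<bar>
     \<le> \<bar>n * (A + ln m)\<bar> + \<bar>(m + e0*n) * (A + ln (m + e0*n))\<bar> / e0 + n"
proof -
  have pos: "0 < m + t*n" if "0 \<le> t" for t
    using assms that by (simp add: add_pos_nonneg)
  obtain \<xi> where \<xi>: "0 < \<xi>" "\<xi> < e" and mvt:
    "(m + e*n) * (A + ln (m + e*n)) - (m + 0*n) * (A + ln (m + 0*n)) = (e - 0) * (n * (A + ln (m + \<xi>*n)) + n)"
    using MVT2[OF assms(3) has_real_derivative_shifted_xlnx[OF pos]] by auto
  have "ln (m + 0*n) \<le> ln (m + \<xi>*n)" and "ln (m + \<xi>*n) \<le> ln (m + e0*n)"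
    using assms \<xi> by (intro ln_shift_mono; simp)+
  then have c: "\<bar>A + ln (m + \<xi>*n)\<bar> \<le> \<bar>A + ln m\<bar> + \<bar>A + ln (m + e0*n)\<bar>"
    by simp
  have n_le: "n \<le> (m + e0*n) / e0"
    using assms by (simp add: le_divide_eq)
  have "\<bar>((m + e*n) * (A + ln (m + e*n)) - m * (A + ln m)) / e\<bar> = \<bar>n * (A + ln (m + \<xi>*n)) + n\<bar>"
    using mvt assms by simp
  also have "\<dots> \<le> n * \<bar>A + ln (m + \<xi>*n)\<bar> + n"
    using abs_triangle_ineq[of "n * (A + ln (m + \<xi>*n))" n] assms(2) by (simp add: abs_mult)
  also have "\<dots> \<le> n * \<bar>A + ln m\<bar> + n * \<bar>A + ln (m + e0*n)\<bar> + n"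
    using mult_left_mono[OF c assms(2)] by (simp add: distrib_left)
  also have "\<dots> \<le> n * \<bar>A + ln m\<bar> + (m + e0*n) / e0 * \<bar>A + ln (m + e0*n)\<bar> + n"
    using mult_right_mono[OF n_le abs_ge_zero] by simp
  also have "\<dots> = \<bar>n * (A + ln m)\<bar> + \<bar>(m + e0*n) * (A + ln (m + e0*n))\<bar> / e0 + n"
    using assms(2) pos[of e0] assms by (simp add: abs_mult)
  finally show ?thesis .
qed

lemma tendsto_integral_shifted_xlnx_quotient:
  fixes M :: "'z measure" and A m n :: "'z \<Rightarrow> real"
  assumes [measurable]: "A \<in> borel_measurable M" "m \<in> borel_measurable M" "n \<in> borel_measurable M"
    and m_pos: "\<forall>z\<in>space M. 0 < m z" and n_nonneg: "\<forall>z\<in>space M. 0 \<le> n z" and "0 < e0"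
    and "integrable M n" "integrable M (\<lambda>z. n z * (A z + ln (m z)))"
    and "integrable M (\<lambda>z. (m z + e0 * n z) * (A z + ln (m z + e0 * n z)))"
  shows "((\<lambda>e. \<integral>z. ((m z + e * n z) * (A z + ln (m z + e * n z)) - m z * (A z + ln (m z))) / e \<partial>M)
           \<longlongrightarrow> (\<integral>z. n z * (A z + ln (m z)) + n z \<partial>M)) (at_right 0)"
proof -
  define D where "D e z = ((m z + e * n z) * (A z + ln (m z + e * n z)) - m z * (A z + ln (m z))) / e"
    for e z
  define w where "w z = \<bar>n z * (A z + ln (m z))\<bar>
    + \<bar>(m z + e0 * n z) * (A z + ln (m z + e0 * n z))\<bar> / e0 + n z" for z
  have "((\<lambda>t. \<integral>z. D (inverse t) z \<partial>M) \<longlongrightarrow> (\<integral>z. n z * (A z + ln (m z)) + n z \<partial>M)) at_top"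
  proof (rule integral_dominated_convergence_at_top[where w = w])
    show "integrable M w"
      unfolding w_def using assms by (intro Bochner_Integration.integrable_add integrable_abs) auto
    show "AE z in M. ((\<lambda>t. D (inverse t) z) \<longlongrightarrow> n z * (A z + ln (m z)) + n z) at_top"
    proof (rule AE_I2)
      fix z assume "z \<in> space M"
      then have "((\<lambda>e. D e z) \<longlongrightarrow> n z * (A z + ln (m z)) + n z) (at_right 0)"
        unfolding D_def using m_pos by (intro shifted_xlnx_quotient_tendsto) auto
      then show "((\<lambda>t. D (inverse t) z) \<longlongrightarrow> n z * (A z + ln (m z)) + n z) at_top"
        by (simp add: filterlim_at_right_to_top)
    qed
    have "AE z in M. norm (D (inverse t) z) \<le> w z" if "1 / e0 \<le> t" for t
    proof -
      have "0 < t"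
        using that \<open>0 < e0\<close> by (smt (verit) divide_pos_pos)
      then have "0 < inverse t" "inverse t \<le> e0"
        using \<open>0 < e0\<close> le_imp_inverse_le[OF that] by auto
      then show ?thesis
        using shifted_xlnx_quotient_bound m_pos n_nonneg by (auto simp: D_def w_def)
    qed
    then show "\<forall>\<^sub>F t in at_top. AE z in M. norm (D (inverse t) z) \<le> w z"
      unfolding eventually_at_top_linorder by blast
  qed (auto simp: D_def)
  then show ?thesis
    by (simp add: D_def filterlim_at_right_to_top)
qed

locale latent_density_family = sigma_finite_measure M for M :: "'z measure" +
  fixes \<Omega> :: "'a::euclidean_space set" and q :: "'z \<Rightarrow> 'a \<Rightarrow> real"
  assumes sets_\<Omega>: "\<Omega> \<in> sets lborel"
    and measurable_q [measurable]: "(\<lambda>(z, l). q z l) \<in> borel_measurable (M \<Otimes>\<^sub>M lborel)"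
    and q_nonneg: "\<forall>z\<in>space M. \<forall>l\<in>\<Omega>. 0 \<le> q z l"
    and q_normalized: "\<forall>l\<in>\<Omega>. integrable M (\<lambda>z. q z l) \<and> (\<integral>z. q z l \<partial>M) = 1"
begin

sublocale P: pair_sigma_finite M lborel
  by (intro pair_sigma_finite.intro sigma_finite_measure_axioms sigma_finite_lborel)

lemma sets_\<Omega>_borel [measurable]: "\<Omega> \<in> sets borel"
  using sets_\<Omega> by simp

lemma borel_measurable_mixture [measurable]:
  assumes "r \<in> borel_measurable borel"
  shows "mixture \<Omega> q r \<in> borel_measurable M"
proof -
  have "(\<lambda>(z, l). indicator \<Omega> l *\<^sub>R (r l * q z l)) \<in> borel_measurable (M \<Otimes>\<^sub>M lborel)"
    using assms by measurable
  from sigma_finite_measure.borel_measurable_lebesgue_integral[OF sigma_finite_lborel this]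
  show ?thesis unfolding mixture_def[abs_def] set_lebesgue_integral_def .
qed

lemma mixture_Fubini:
  assumes int: "integrable (M \<Otimes>\<^sub>M lborel) (\<lambda>(z, l). indicator \<Omega> l * r l * q z l * B z)"
  shows "(LINT l:\<Omega>|lborel. r l * (\<integral>z. q z l * B z \<partial>M)) = (\<integral>z. mixture \<Omega> q r z * B z \<partial>M)"
    and "integrable M (\<lambda>z. mixture \<Omega> q r z * B z)"
    and "set_integrable lborel \<Omega> (\<lambda>l. r l * (\<integral>z. q z l * B z \<partial>M))"
proof -
  have inner_M: "indicator \<Omega> l *\<^sub>R (r l * (\<integral>z. q z l * B z \<partial>M))
      = (\<integral>z. indicator \<Omega> l * r l * q z l * B z \<partial>M)" for l
    by (simp add: mult.assoc)
  have inner_lborel: "(\<integral>l. indicator \<Omega> l * r l * q z l * B z \<partial>lborel) = mixture \<Omega> q r z * B z" for z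
    unfolding mixture_def set_lebesgue_integral_def
    by (simp add: mult.assoc flip: integral_mult_left_zero)
  show "(LINT l:\<Omega>|lborel. r l * (\<integral>z. q z l * B z \<partial>M)) = (\<integral>z. mixture \<Omega> q r z * B z \<partial>M)"
    unfolding set_lebesgue_integral_def inner_M P.Fubini_integral[OF int] inner_lborel ..
  show "integrable M (\<lambda>z. mixture \<Omega> q r z * B z)"
    using P.integrable_fst[OF int] unfolding inner_lborel .
  show "set_integrable lborel \<Omega> (\<lambda>l. r l * (\<integral>z. q z l * B z \<partial>M))"
    unfolding set_integrable_def inner_M by (rule P.integrable_snd[OF int])
qed

lemma mixture_nonneg:
  assumes "\<forall>l\<in>\<Omega>. 0 \<le> r l" and "z \<in> space M"
  shows "0 \<le> mixture \<Omega> q r z"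
  unfolding mixture_def set_lebesgue_integral_def
  using assms q_nonneg by (intro Bochner_Integration.integral_nonneg) (auto simp: indicator_def)

lemma mixture_add_scaled:
  assumes "set_integrable lborel \<Omega> (\<lambda>l. r l * q z l)" and "set_integrable lborel \<Omega> (\<lambda>l. s l * q z l)"
  shows "mixture \<Omega> q (\<lambda>l. r l + e * s l) z = mixture \<Omega> q r z + e * mixture \<Omega> q s z"
proof -
  have "mixture \<Omega> q (\<lambda>l. r l + e * s l) z = (LINT l:\<Omega>|lborel. r l * q z l + e * (s l * q z l))"
    unfolding mixture_def by (simp add: algebra_simps)
  also have "\<dots> = mixture \<Omega> q r z + e * mixture \<Omega> q s z"
    using assms unfolding mixture_def by (simp add: set_integral_add set_integrable_mult_right)
  finally show ?thesis .
qed

lemma integrable_pair_density: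
  assumes "prob_density \<Omega> \<psi>"
  shows "integrable (M \<Otimes>\<^sub>M lborel) (\<lambda>(z, l). indicator \<Omega> l * \<psi> l * q z l)"
proof (rule integrableI_nonneg)
  have \<psi>: "\<psi> \<in> borel_measurable borel" "\<forall>l\<in>\<Omega>. 0 \<le> \<psi> l" "set_integrable lborel \<Omega> \<psi>"
    "(LINT l:\<Omega>|lborel. \<psi> l) = 1"
    using assms unfolding prob_density_def by auto
  show "(\<lambda>(z, l). indicator \<Omega> l * \<psi> l * q z l) \<in> borel_measurable (M \<Otimes>\<^sub>M lborel)"
    using \<psi>(1) by measurable
  show "AE x in M \<Otimes>\<^sub>M lborel. 0 \<le> (case x of (z, l) \<Rightarrow> indicator \<Omega> l * \<psi> l * q z l)"
    using q_nonneg \<psi>(2) by (intro AE_I2) (auto simp: space_pair_measure indicator_def)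
  have inner: "(\<integral>\<^sup>+z. ennreal (indicator \<Omega> l * \<psi> l * q z l) \<partial>M) = ennreal (indicator \<Omega> l * \<psi> l)"
    for l
  proof (cases "l \<in> \<Omega>")
    case True
    then have "(\<integral>\<^sup>+z. ennreal (indicator \<Omega> l * \<psi> l * q z l) \<partial>M) = ennreal (\<integral>z. \<psi> l * q z l \<partial>M)"
      using q_normalized q_nonneg \<psi>(2) by (simp add: nn_integral_eq_integral AE_I2)
    then show ?thesis
      using True q_normalized by simp
  qed simp
  have "(\<integral>\<^sup>+x. ennreal (case x of (z, l) \<Rightarrow> indicator \<Omega> l * \<psi> l * q z l) \<partial>(M \<Otimes>\<^sub>M lborel))
      = (\<integral>\<^sup>+l. ennreal (indicator \<Omega> l * \<psi> l) \<partial>lborel)"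
    using \<psi>(1) by (simp add: P.nn_integral_snd[symmetric] inner split_beta')
  also have "\<dots> = ennreal (LINT l:\<Omega>|lborel. \<psi> l)"
    using \<psi> unfolding set_integrable_def set_lebesgue_integral_def
    by (simp add: nn_integral_eq_integral AE_I2 indicator_def)
  finally show "(\<integral>\<^sup>+x. ennreal (case x of (z, l) \<Rightarrow> indicator \<Omega> l * \<psi> l * q z l) \<partial>(M \<Otimes>\<^sub>M lborel)) < \<infinity>"
    using \<psi>(4) by simp
qed

lemma mixture_prob_density:
  assumes "prob_density \<Omega> \<psi>"
  shows "integrable M (mixture \<Omega> q \<psi>)" and "(\<integral>z. mixture \<Omega> q \<psi> z \<partial>M) = 1"
proof -
  note F = mixture_Fubini[of \<psi> "\<lambda>_. 1", simplified, OF integrable_pair_density[OF assms]]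
  show "integrable M (mixture \<Omega> q \<psi>)"
    using F(2) by simp
  have "(LINT l:\<Omega>|lborel. \<psi> l * (\<integral>z. q z l \<partial>M)) = (LINT l:\<Omega>|lborel. \<psi> l)"
    using q_normalized by (intro set_lebesgue_integral_cong[OF sets_\<Omega>]) auto
  then show "(\<integral>z. mixture \<Omega> q \<psi> z \<partial>M) = 1"
    using F(1) assms by (simp add: prob_density_def)
qed

lemma set_integral_mixture_plus_one:
  assumes \<psi>: "prob_density \<Omega> \<psi>"
    and int: "integrable (M \<Otimes>\<^sub>M lborel) (\<lambda>(z, l). indicator \<Omega> l * \<psi> l * q z l * B z)"
  shows "(LINT l:\<Omega>|lborel. \<psi> l * ((\<integral>z. q z l * B z \<partial>M) + 1))
    = (\<integral>z. mixture \<Omega> q \<psi> z * B z + mixture \<Omega> q \<psi> z \<partial>M)"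
proof -
  note F = mixture_Fubini[OF int]
  have "(LINT l:\<Omega>|lborel. \<psi> l * ((\<integral>z. q z l * B z \<partial>M) + 1))
      = (LINT l:\<Omega>|lborel. \<psi> l * (\<integral>z. q z l * B z \<partial>M)) + (LINT l:\<Omega>|lborel. \<psi> l)"
    using F(3) \<psi> unfolding prob_density_def by (simp add: distrib_left set_integral_add)
  also have "\<dots> = (\<integral>z. mixture \<Omega> q \<psi> z * B z \<partial>M) + (\<integral>z. mixture \<Omega> q \<psi> z \<partial>M)"
    using F(1) \<psi> mixture_prob_density(2)[OF \<psi>] by (simp add: prob_density_def)
  also have "\<dots> = (\<integral>z. mixture \<Omega> q \<psi> z * B z + mixture \<Omega> q \<psi> z \<partial>M)"
    using F(2) mixture_prob_density(1)[OF \<psi>] by simp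
  finally show ?thesis .
qed

lemma integrable_weighted_between:
  assumes [measurable]: "r \<in> borel_measurable borel" "s \<in> borel_measurable borel" "c \<in> borel_measurable M"
    and r_nonneg: "\<forall>l\<in>\<Omega>. 0 \<le> r l" and s_nonneg: "\<forall>l\<in>\<Omega>. 0 \<le> s l"
    and between: "\<forall>z\<in>space M. a z \<le> c z \<and> c z \<le> b z" and "0 \<le> e" "e \<le> e0"
    and int_ra: "integrable (M \<Otimes>\<^sub>M lborel) (\<lambda>(z, l). indicator \<Omega> l * r l * q z l * a z)"
    and int_sa: "integrable (M \<Otimes>\<^sub>M lborel) (\<lambda>(z, l). indicator \<Omega> l * s l * q z l * a z)"
    and int_b: "integrable (M \<Otimes>\<^sub>M lborel) (\<lambda>(z, l). indicator \<Omega> l * (r l + e0 * s l) * q z l * b z)"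
  shows "integrable (M \<Otimes>\<^sub>M lborel) (\<lambda>(z, l). indicator \<Omega> l * (r l + e * s l) * q z l * c z)"
proof (rule Bochner_Integration.integrable_bound)
  define W where "W x = \<bar>case x of (z, l) \<Rightarrow> indicator \<Omega> l * r l * q z l * a z\<bar>
    + e0 * \<bar>case x of (z, l) \<Rightarrow> indicator \<Omega> l * s l * q z l * a z\<bar>
    + \<bar>case x of (z, l) \<Rightarrow> indicator \<Omega> l * (r l + e0 * s l) * q z l * b z\<bar>" for x
  show "integrable (M \<Otimes>\<^sub>M lborel) W"
    unfolding W_def using int_ra int_sa int_b by (intro Bochner_Integration.integrable_add integrable_abs) auto
  show "(\<lambda>(z, l). indicator \<Omega> l * (r l + e * s l) * q z l * c z) \<in> borel_measurable (M \<Otimes>\<^sub>M lborel)"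
    by measurable
  have "\<bar>indicator \<Omega> l * (r l + e * s l) * q z l * c z\<bar> \<le> W (z, l)" if "z \<in> space M" for z l
  proof (cases "l \<in> \<Omega>")
    case True
    have nonneg: "0 \<le> r l" "0 \<le> s l" "0 \<le> q z l" "0 \<le> e0" "0 \<le> r l + e0 * s l"
      using True that r_nonneg s_nonneg q_nonneg \<open>0 \<le> e\<close> \<open>e \<le> e0\<close> by auto
    have "0 \<le> (r l + e * s l) * q z l" "(r l + e * s l) * q z l \<le> (r l + e0 * s l) * q z l"
      using nonneg \<open>0 \<le> e\<close> \<open>e \<le> e0\<close> by (auto intro!: mult_right_mono)
    from abs_mult_between_le[OF this] between that
    have "\<bar>(r l + e * s l) * q z l * c z\<bar> \<le> (r l + e0 * s l) * q z l * (\<bar>a z\<bar> + \<bar>b z\<bar>)"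
      by auto
    also have "\<dots> = W (z, l)"
      using True nonneg by (simp add: W_def abs_mult) (simp add: algebra_simps)
    finally show ?thesis
      using True by simp
  qed (simp add: W_def)
  then show "AE x in M \<Otimes>\<^sub>M lborel. norm (case x of (z, l) \<Rightarrow> indicator \<Omega> l * (r l + e * s l) * q z l * c z) \<le> norm (W x)"
    by (intro AE_I2) (auto simp: space_pair_measure intro: order_trans[OF _ abs_ge_self])
qed

end

locale mixture_objective = latent_density_family M \<Omega> q for M :: "'z measure" and \<Omega> q +
  fixes \<pi> :: "'z \<Rightarrow> real" and \<rho> :: "'a::euclidean_space \<Rightarrow> real"
  assumes measurable_\<pi> [measurable]: "\<pi> \<in> borel_measurable M"
    and density_\<rho>: "prob_density \<Omega> \<rho>"
    and set_integrable_\<rho>: "\<forall>z\<in>space M. set_integrable lborel \<Omega> (\<lambda>l. \<rho> l * q z l)"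
    and mixture_\<rho>_pos: "\<forall>z\<in>space M. 0 < mixture \<Omega> q \<rho> z"
    and integrable_\<rho>: "integrable (M \<Otimes>\<^sub>M lborel)
      (\<lambda>(z, l). indicator \<Omega> l * \<rho> l * q z l * (- ln (\<pi> z) + ln (mixture \<Omega> q \<rho> z)))"
begin

lemma measurable_\<rho> [measurable]: "\<rho> \<in> borel_measurable borel"
  using density_\<rho> by (simp add: prob_density_def)

lemma VI_L_perturbed_eq_integral:
  assumes \<psi>: "prob_density \<Omega> \<psi>"
    and set_integrable_\<psi>: "\<forall>z\<in>space M. set_integrable lborel \<Omega> (\<lambda>l. \<psi> l * q z l)"
    and integrable_\<psi>: "integrable (M \<Otimes>\<^sub>M lborel)
      (\<lambda>(z, l). indicator \<Omega> l * \<psi> l * q z l * (- ln (\<pi> z) + ln (mixture \<Omega> q \<rho> z)))"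
    and integrable_e0: "integrable (M \<Otimes>\<^sub>M lborel)
      (\<lambda>(z, l). indicator \<Omega> l * (\<rho> l + e0 * \<psi> l) * q z l *
         (- ln (\<pi> z) + ln (mixture \<Omega> q (\<lambda>l'. \<rho> l' + e0 * \<psi> l') z)))"
    and "0 \<le> e" "e \<le> e0"
  defines "m \<equiv> mixture \<Omega> q \<rho>" and "n \<equiv> mixture \<Omega> q \<psi>"
  shows "VI_L M \<Omega> q \<pi> (\<lambda>l. \<rho> l + e * \<psi> l)
      = (\<integral>z. (m z + e * n z) * (- ln (\<pi> z) + ln (m z + e * n z)) \<partial>M)"
    and "integrable M (\<lambda>z. (m z + e * n z) * (- ln (\<pi> z) + ln (m z + e * n z)))"
proof -
  have \<psi>_measurable [measurable]: "\<psi> \<in> borel_measurable borel" and \<psi>_nonneg: "\<forall>l\<in>\<Omega>. 0 \<le> \<psi> l"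
    using \<psi> by (simp_all add: prob_density_def)
  have \<rho>_nonneg: "\<forall>l\<in>\<Omega>. 0 \<le> \<rho> l"
    using density_\<rho> by (simp add: prob_density_def)
  have mixture_perturbed: "mixture \<Omega> q (\<lambda>l. \<rho> l + t * \<psi> l) z = m z + t * n z" if "z \<in> space M" for t z
    unfolding m_def n_def using that set_integrable_\<rho> set_integrable_\<psi> by (intro mixture_add_scaled) auto
  have ln_mono: "ln (m z + 0 * n z) \<le> ln (m z + e * n z)" "ln (m z + e * n z) \<le> ln (m z + e0 * n z)"
    if "z \<in> space M" for z
    using that \<open>0 \<le> e\<close> \<open>e \<le> e0\<close> mixture_\<rho>_pos mixture_nonneg[OF \<psi>_nonneg]
    unfolding m_def n_def by (intro ln_shift_mono; simp)+
  then have between: "\<forall>z\<in>space M. - ln (\<pi> z) + ln (mixture \<Omega> q \<rho> z)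
        \<le> - ln (\<pi> z) + ln (mixture \<Omega> q (\<lambda>l'. \<rho> l' + e * \<psi> l') z)
     \<and> - ln (\<pi> z) + ln (mixture \<Omega> q (\<lambda>l'. \<rho> l' + e * \<psi> l') z)
        \<le> - ln (\<pi> z) + ln (mixture \<Omega> q (\<lambda>l'. \<rho> l' + e0 * \<psi> l') z)"
    by (simp add: mixture_perturbed m_def)
  have c_measurable: "(\<lambda>z. - ln (\<pi> z) + ln (mixture \<Omega> q (\<lambda>l'. \<rho> l' + e * \<psi> l') z)) \<in> borel_measurable M"
    by measurable
  note F = mixture_Fubini[OF integrable_weighted_between[OF measurable_\<rho> \<psi>_measurable c_measurable
        \<rho>_nonneg \<psi>_nonneg between \<open>0 \<le> e\<close> \<open>e \<le> e0\<close> integrable_\<rho> integrable_\<psi> integrable_e0]]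
  have integrand_e: "mixture \<Omega> q (\<lambda>l. \<rho> l + e * \<psi> l) z * (- ln (\<pi> z) + ln (mixture \<Omega> q (\<lambda>l. \<rho> l + e * \<psi> l) z))
      = (m z + e * n z) * (- ln (\<pi> z) + ln (m z + e * n z))" if "z \<in> space M" for z
    using that by (simp add: mixture_perturbed)
  show "VI_L M \<Omega> q \<pi> (\<lambda>l. \<rho> l + e * \<psi> l)
      = (\<integral>z. (m z + e * n z) * (- ln (\<pi> z) + ln (m z + e * n z)) \<partial>M)"
    unfolding VI_L_def F(1) using integrand_e by (rule Bochner_Integration.integral_cong[OF refl])
  show "integrable M (\<lambda>z. (m z + e * n z) * (- ln (\<pi> z) + ln (m z + e * n z)))"
    using F(2) integrand_e by (rule Bochner_Integration.integrable_cong[THEN iffD1, OF refl, rotated])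
qed

lemma VI_L_directional_derivative:
  assumes \<psi>: "prob_density \<Omega> \<psi>"
    and set_integrable_\<psi>: "\<forall>z\<in>space M. set_integrable lborel \<Omega> (\<lambda>l. \<psi> l * q z l)"
    and integrable_\<psi>: "integrable (M \<Otimes>\<^sub>M lborel)
      (\<lambda>(z, l). indicator \<Omega> l * \<psi> l * q z l * (- ln (\<pi> z) + ln (mixture \<Omega> q \<rho> z)))"
    and integrable_e0: "integrable (M \<Otimes>\<^sub>M lborel)
      (\<lambda>(z, l). indicator \<Omega> l * (\<rho> l + e0 * \<psi> l) * q z l *
         (- ln (\<pi> z) + ln (mixture \<Omega> q (\<lambda>l'. \<rho> l' + e0 * \<psi> l') z)))"
    and "0 < e0"
  shows "((\<lambda>\<epsilon>. (VI_L M \<Omega> q \<pi> (\<lambda>l. \<rho> l + \<epsilon> * \<psi> l) - VI_L M \<Omega> q \<pi> \<rho>) / \<epsilon>)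
    \<longlongrightarrow> (LINT l:\<Omega>|lborel. \<psi> l * ((\<integral>z. q z l * (- ln (\<pi> z) + ln (mixture \<Omega> q \<rho> z)) \<partial>M) + 1)))
    (at_right 0)"
proof -
  define A m n where "A z = - ln (\<pi> z)" and "m = mixture \<Omega> q \<rho>" and "n = mixture \<Omega> q \<psi>" for z
  have [measurable]: "\<psi> \<in> borel_measurable borel"
    using \<psi> by (simp add: prob_density_def)
  note perturbed = VI_L_perturbed_eq_integral[OF \<psi> set_integrable_\<psi> integrable_\<psi> integrable_e0, folded A_def m_def n_def]
  have L0: "VI_L M \<Omega> q \<pi> \<rho> = (\<integral>z. m z * (A z + ln (m z)) \<partial>M)"
    and integrable_L0: "integrable M (\<lambda>z. m z * (A z + ln (m z)))"
    using perturbed[of 0] \<open>0 < e0\<close> by simp_all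
  have "(VI_L M \<Omega> q \<pi> (\<lambda>l. \<rho> l + e * \<psi> l) - VI_L M \<Omega> q \<pi> \<rho>) / e
      = (\<integral>z. ((m z + e * n z) * (A z + ln (m z + e * n z)) - m z * (A z + ln (m z))) / e \<partial>M)"
    if "0 < e" "e \<le> e0" for e
  proof -
    have "(VI_L M \<Omega> q \<pi> (\<lambda>l. \<rho> l + e * \<psi> l) - VI_L M \<Omega> q \<pi> \<rho>) / e
        = ((\<integral>z. (m z + e * n z) * (A z + ln (m z + e * n z)) \<partial>M) - (\<integral>z. m z * (A z + ln (m z)) \<partial>M)) / e"
      using that by (simp add: L0 perturbed(1) A_def)
    also have "\<dots> = (\<integral>z. ((m z + e * n z) * (A z + ln (m z + e * n z)) - m z * (A z + ln (m z))) / e \<partial>M)"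
      using that perturbed(2)[of e] integrable_L0 by (simp add: A_def)
    finally show ?thesis .
  qed
  then have quotient: "\<forall>\<^sub>F e in at_right 0. (VI_L M \<Omega> q \<pi> (\<lambda>l. \<rho> l + e * \<psi> l) - VI_L M \<Omega> q \<pi> \<rho>) / e
      = (\<integral>z. ((m z + e * n z) * (A z + ln (m z + e * n z)) - m z * (A z + ln (m z))) / e \<partial>M)"
    unfolding eventually_at_right_field using \<open>0 < e0\<close> by (intro exI[of _ e0]) auto
  have target: "(LINT l:\<Omega>|lborel. \<psi> l * ((\<integral>z. q z l * (- ln (\<pi> z) + ln (mixture \<Omega> q \<rho> z)) \<partial>M) + 1))
      = (\<integral>z. n z * (A z + ln (m z)) + n z \<partial>M)"
    using set_integral_mixture_plus_one[OF \<psi> integrable_\<psi>] by (simp add: A_def m_def n_def)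
  have [measurable]: "A \<in> borel_measurable M" "m \<in> borel_measurable M" "n \<in> borel_measurable M"
    unfolding A_def[abs_def] m_def n_def by measurable
  have "\<forall>z\<in>space M. 0 < m z" "\<forall>z\<in>space M. 0 \<le> n z"
    using mixture_\<rho>_pos mixture_nonneg[of \<psi>] \<psi> unfolding m_def n_def prob_density_def by auto
  with mixture_Fubini(2)[OF integrable_\<psi>, folded A_def m_def n_def] perturbed(2)[of e0]
    mixture_prob_density(1)[OF \<psi>, folded n_def] \<open>0 < e0\<close>
  show ?thesis
    unfolding target tendsto_cong[OF quotient] by (intro tendsto_integral_shifted_xlnx_quotient) simp_all
qed

end

theorem theorem1:
  fixes M :: "'z measure" and \<Omega> :: "'a::euclidean_space set"
    and q :: "'z \<Rightarrow> 'a \<Rightarrow> real" and \<pi> :: "'z \<Rightarrow> real" and \<rho> :: "'a \<Rightarrow> real"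
  assumes "sigma_finite_measure M"
    and "\<Omega> \<in> sets lborel"
    and "(\<lambda>(z, l). q z l) \<in> borel_measurable (M \<Otimes>\<^sub>M lborel)"
    and "\<forall>z\<in>space M. \<forall>l\<in>\<Omega>. 0 \<le> q z l"
    and "\<forall>l\<in>\<Omega>. integrable M (\<lambda>z. q z l) \<and> (\<integral>z. q z l \<partial>M) = 1"
    and "\<pi> \<in> borel_measurable M"
    and "\<forall>z\<in>space M. 0 < \<pi> z"
    and "prob_density \<Omega> \<rho>"
    and "\<forall>z\<in>space M. set_integrable lborel \<Omega> (\<lambda>l. \<rho> l * q z l)"
    and "\<forall>z\<in>space M. 0 < mixture \<Omega> q \<rho> z"
    and "integrable (M \<Otimes>\<^sub>M lborel)
           (\<lambda>(z, l). indicator \<Omega> l * \<rho> l * q z l * (- ln (\<pi> z) + ln (mixture \<Omega> q \<rho> z)))"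
    and "\<And>\<psi>. prob_density \<Omega> \<psi> \<Longrightarrow>
           (\<forall>z\<in>space M. set_integrable lborel \<Omega> (\<lambda>l. \<psi> l * q z l))
         \<and> integrable (M \<Otimes>\<^sub>M lborel)
             (\<lambda>(z, l). indicator \<Omega> l * \<psi> l * q z l * (- ln (\<pi> z) + ln (mixture \<Omega> q \<rho> z)))
         \<and> (\<exists>\<epsilon>0>0. integrable (M \<Otimes>\<^sub>M lborel)
             (\<lambda>(z, l). indicator \<Omega> l * (\<rho> l + \<epsilon>0 * \<psi> l) * q z l *
                (- ln (\<pi> z) + ln (mixture \<Omega> q (\<lambda>l'. \<rho> l' + \<epsilon>0 * \<psi> l') z))))"
  shows "first_variation_at \<Omega> (VI_L M \<Omega> q \<pi>) \<rho>
           (\<lambda>l. (\<integral>z. q z l * (- ln (\<pi> z) + ln (mixture \<Omega> q \<rho> z)) \<partial>M) + 1)"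
proof -
  interpret mixture_objective M \<Omega> q \<pi> \<rho>
    using assms(1-6,8-11)
    by (intro mixture_objective.intro latent_density_family.intro latent_density_family_axioms.intro
        mixture_objective_axioms.intro) auto
  show ?thesis
    unfolding first_variation_at_def
    using assms(12) by (blast intro: VI_L_directional_derivative)
qed

end
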